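(* Let $T$ be a densely defined symmetric operator in a Hilbert space $\mathcal{H}$ with scalar product $(\cdot,\cdot)$, let $g_1,\dots,g_n\in\mathcal{H}$ and set $\mathcal{D}_0:=\{u\in\mathcal{D}(T):(u,g_j)=0,\ j=1,\dots,n\}$. If $x\in\mathcal{H}$ is such that the map $\mathcal{D}_0\to\mathbb{C}$, $u\mapsto(Tu,x)$, is bounded, then $x\in\mathcal{D}(T^* )$. *)

theory Defs
  imports "HOL-Analysis.Analysis"
begin

class complex_vector = real_vector +
  fixes scaleC :: "complex \<Rightarrow> 'a \<Rightarrow> 'a" (infixr "*\<^sub>C" 75)
  assumes scaleC_add_right: "a *\<^sub>C (x + y) = a *\<^sub>C x + a *\<^sub>C y"
    and scaleC_add_left: "(a + b) *\<^sub>C x = a *\<^sub>C x + b *\<^sub>C x"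
    and scaleC_scaleC: "a *\<^sub>C (b *\<^sub>C x) = (a * b) *\<^sub>C x"
    and scaleC_one: "1 *\<^sub>C x = x"
    and scaleR_scaleC: "scaleR r x = of_real r *\<^sub>C x"

class complex_inner = complex_vector + real_normed_vector +
  fixes cinner :: "'a \<Rightarrow> 'a \<Rightarrow> complex"
  assumes cinner_commute: "cinner x y = cnj (cinner y x)"
    and cinner_add_left: "cinner (x + y) z = cinner x z + cinner y z"
    and cinner_scaleC_left: "cinner (r *\<^sub>C x) y = r * cinner x y"
    and cinner_real_nonneg: "Im (cinner x x) = 0 \<and> Re (cinner x x) \<ge> 0"
    and cinner_eq_zero_iff: "cinner x x = 0 \<longleftrightarrow> x = 0"
    and norm_eq_sqrt_cinner: "norm x = sqrt (Re (cinner x x))"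

definition is_operator :: "'a::complex_inner set \<Rightarrow> ('a \<Rightarrow> 'a) \<Rightarrow> bool" where
  "is_operator D T \<longleftrightarrow> 0 \<in> D \<and> (\<forall>u\<in>D. \<forall>v\<in>D. u + v \<in> D) \<and> (\<forall>c. \<forall>u\<in>D. c *\<^sub>C u \<in> D)
     \<and> (\<forall>u\<in>D. \<forall>v\<in>D. T (u + v) = T u + T v) \<and> (\<forall>c. \<forall>u\<in>D. T (c *\<^sub>C u) = c *\<^sub>C T u)"

definition densely_defined :: "'a::complex_inner set \<Rightarrow> bool" where
  "densely_defined D \<longleftrightarrow> closure D = UNIV"

definition symmetric_op :: "'a::complex_inner set \<Rightarrow> ('a \<Rightarrow> 'a) \<Rightarrow> bool" where
  "symmetric_op D T \<longleftrightarrow> (\<forall>u\<in>D. \<forall>v\<in>D. cinner (T u) v = cinner u (T v))"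

definition adjoint_domain :: "'a::complex_inner set \<Rightarrow> ('a \<Rightarrow> 'a) \<Rightarrow> 'a set" where
  "adjoint_domain D T = {x. \<exists>y. \<forall>u\<in>D. cinner (T u) x = cinner u y}"

end

theory Submission
  imports Defs
begin

text \<open>Write \<open>f u = (T u, x)\<close>. The subspace \<open>D\<^sub>0\<close> is cut out of \<open>D(T)\<close> by finitely many
  linear conditions \<open>(u, g\<^sub>j) = 0\<close>, and a linear functional bounded on the kernel of one such condition
  is bounded on the whole space: write \<open>u = u\<^sub>0 + (u, g) w\<close> with \<open>(w, g) = 1\<close>. So \<open>f\<close> is bounded on
  \<open>D(T)\<close>. A bounded linear functional on an arbitrary (not necessarily closed) subspace of a Hilbert
  space is represented by a vector \<open>y\<close>: a minimising sequence of \<open>\<parallel>u\<parallel>\<^sup>2 - 2 Re f u\<close> is Cauchy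
  by the parallelogram law, and its limit \<open>y\<close> satisfies \<open>f v = (v, y)\<close> by the first-order condition
  of the minimum.\<close>

lemma scaleC_of_real: "complex_of_real r *\<^sub>C (x::'a::complex_vector) = r *\<^sub>R x"
  by (simp add: scaleR_scaleC)

lemma cinner_add_right: "cinner (x::'a::complex_inner) (y + z) = cinner x y + cinner x z"
  by (metis cinner_add_left cinner_commute complex_cnj_add)

lemma cinner_scaleC_right: "cinner (x::'a::complex_inner) (c *\<^sub>C y) = cnj c * cinner x y"
  by (metis cinner_commute cinner_scaleC_left complex_cnj_mult)

lemma cinner_zero_left [simp]: "cinner (0::'a::complex_inner) y = 0"
  using cinner_add_left[of "0::'a" 0 y] by simp

lemma cinner_zero_right [simp]: "cinner (x::'a::complex_inner) 0 = 0"
  by (metis cinner_commute cinner_zero_left complex_cnj_zero)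

lemma cinner_minus_left: "cinner (- x::'a::complex_inner) y = - cinner x y"
proof -
  have "cinner x y + cinner (- x) y = 0" using cinner_add_left[of x "- x" y] by simp
  then show ?thesis by (rule minus_unique[symmetric])
qed

lemma cinner_minus_right: "cinner (x::'a::complex_inner) (- y) = - cinner x y"
  by (metis cinner_commute cinner_minus_left complex_cnj_minus)

lemma cinner_scaleR_right: "cinner (x::'a::complex_inner) (r *\<^sub>R y) = of_real r * cinner x y"
  by (simp add: scaleR_scaleC cinner_scaleC_right)

lemma power2_norm_eq_cinner: "(norm (x::'a::complex_inner))\<^sup>2 = Re (cinner x x)"
  using cinner_real_nonneg[of x] by (simp add: norm_eq_sqrt_cinner)

lemma power2_norm_add:
  "(norm (a + b::'a::complex_inner))\<^sup>2 = (norm a)\<^sup>2 + (norm b)\<^sup>2 + 2 * Re (cinner a b)"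
proof -
  have "Re (cinner b a) = Re (cinner a b)" by (subst cinner_commute) simp
  then show ?thesis by (simp add: power2_norm_eq_cinner cinner_add_left cinner_add_right)
qed

lemma parallelogram_law:
  "(norm (a + b::'a::complex_inner))\<^sup>2 + (norm (a - b))\<^sup>2 = 2 * (norm a)\<^sup>2 + 2 * (norm b)\<^sup>2"
  using power2_norm_add[of a b] power2_norm_add[of a "- b"] by (simp add: cinner_minus_right)

lemma norm_scaleC: "norm (c *\<^sub>C (x::'a::complex_inner)) = cmod c * norm x"
proof -
  have "cinner (c *\<^sub>C x) (c *\<^sub>C x) = (c * cnj c) * cinner x x"
    by (simp add: cinner_scaleC_left cinner_scaleC_right)
  also have "c * cnj c = complex_of_real ((cmod c)\<^sup>2)"
    by (metis complex_norm_square)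
  finally have "(norm (c *\<^sub>C x))\<^sup>2 = ((cmod c) * norm x)\<^sup>2"
    by (simp add: power2_norm_eq_cinner power_mult_distrib)
  then show ?thesis by simp
qed

lemma cinner_Cauchy_Schwarz: "cmod (cinner (x::'a::complex_inner) y) \<le> norm x * norm y"
proof (cases "y = 0")
  case True
  then show ?thesis by simp
next
  case False
  define q where "q = (norm y)\<^sup>2"
  define z where "z = cinner x y"
  define c where "c = z / complex_of_real q"
  have q: "q > 0" using False by (simp add: q_def)
  \<comment> \<open>expand \<open>0 \<le> \<parallel>x - c y\<parallel>\<^sup>2\<close> for the optimal \<open>c = (x, y) / \<parallel>y\<parallel>\<^sup>2\<close>\<close>
  have expand: "0 \<le> (norm x)\<^sup>2 - 2 * Re (cnj c * z) + (cmod c)\<^sup>2 * q"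
  proof -
    have "0 \<le> (norm (x + - (c *\<^sub>C y)))\<^sup>2" by simp
    also have "\<dots> = (norm x)\<^sup>2 + (norm (- (c *\<^sub>C y)))\<^sup>2 + 2 * Re (cinner x (- (c *\<^sub>C y)))"
      by (rule power2_norm_add)
    also have "\<dots> = (norm x)\<^sup>2 - 2 * Re (cnj c * z) + (cmod c)\<^sup>2 * q"
      by (simp add: cinner_minus_right cinner_scaleC_right norm_scaleC power_mult_distrib z_def q_def)
    finally show ?thesis .
  qed
  have "cnj c * z = (z * cnj z) / complex_of_real q" by (simp add: c_def)
  also have "z * cnj z = complex_of_real ((cmod z)\<^sup>2)" by (metis complex_norm_square)
  finally have "Re (cnj c * z) = (cmod z)\<^sup>2 / q" by simp
  moreover have "(cmod c)\<^sup>2 * q = (cmod z)\<^sup>2 / q"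
    using q by (simp add: c_def norm_divide power2_eq_square)
  ultimately have "(cmod z)\<^sup>2 / q \<le> (norm x)\<^sup>2" using expand by linarith
  then have "(cmod z)\<^sup>2 \<le> (norm x)\<^sup>2 * q" using q by (simp add: divide_le_eq)
  then have "(cmod z)\<^sup>2 \<le> (norm x * norm y)\<^sup>2" by (simp add: q_def power_mult_distrib)
  then show ?thesis using power2_le_imp_le[of "cmod z" "norm x * norm y"] by (simp add: z_def)
qed

lemma bounded_linear_cinner_right: "bounded_linear (cinner (x::'a::complex_inner))"
proof (rule bounded_linear_intro[of _ "norm x"])
  show "cmod (cinner x y) \<le> norm y * norm x" for y
    using cinner_Cauchy_Schwarz[of x y] by (simp add: mult.commute)
qed (simp_all add: cinner_add_right cinner_scaleR_right scaleR_conv_of_real)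

definition complex_subspace :: "'a::complex_vector set \<Rightarrow> bool" where
  "complex_subspace S \<longleftrightarrow> 0 \<in> S \<and> (\<forall>a\<in>S. \<forall>b\<in>S. a + b \<in> S) \<and> (\<forall>c. \<forall>a\<in>S. c *\<^sub>C a \<in> S)"

definition complex_linear_on :: "'a::complex_vector set \<Rightarrow> ('a \<Rightarrow> complex) \<Rightarrow> bool" where
  "complex_linear_on S f \<longleftrightarrow>
     (\<forall>a\<in>S. \<forall>b\<in>S. f (a + b) = f a + f b) \<and> (\<forall>c. \<forall>a\<in>S. f (c *\<^sub>C a) = c * f a)"

lemma complex_subspace_scaleR:
  "complex_subspace S \<Longrightarrow> a \<in> S \<Longrightarrow> r *\<^sub>R a \<in> S"
  by (metis complex_subspace_def scaleC_of_real)

lemma complex_linear_on_scaleR: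
  "complex_linear_on S f \<Longrightarrow> a \<in> S \<Longrightarrow> f (r *\<^sub>R a) = of_real r * f a"
  by (metis complex_linear_on_def scaleC_of_real)

lemma complex_subspace_orthogonal:
  assumes "complex_subspace S"
  shows "complex_subspace {u\<in>S. cinner u g = 0}"
  using assms by (simp add: complex_subspace_def cinner_add_left cinner_scaleC_left)

lemma bounded_if_bounded_on_orthogonal:
  fixes S :: "'a::complex_inner set"
  assumes S: "complex_subspace S" and f: "complex_linear_on S f"
    and C: "\<forall>u\<in>S. cinner u g = 0 \<longrightarrow> cmod (f u) \<le> C * norm u"
  shows "\<exists>K. \<forall>u\<in>S. cmod (f u) \<le> K * norm u"
proof (cases "\<exists>v\<in>S. cinner v g \<noteq> 0")
  case False
  then show ?thesis using C by blast
next
  case True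
  then obtain v where v: "v \<in> S" "cinner v g \<noteq> 0" by blast
  define w where "w = (1 / cinner v g) *\<^sub>C v"
  have wS: "w \<in> S" using S v by (simp add: complex_subspace_def w_def)
  have w1: "cinner w g = 1" using v by (simp add: w_def cinner_scaleC_left)
  show ?thesis
  proof (intro exI ballI)
    fix u assume u: "u \<in> S"
    define p where "p = cinner u g"
    define u\<^sub>0 where "u\<^sub>0 = u + (- p) *\<^sub>C w"
    have pwS: "(- p) *\<^sub>C w \<in> S" using S wS by (simp add: complex_subspace_def)
    have u\<^sub>0S: "u\<^sub>0 \<in> S" using S u pwS by (simp add: complex_subspace_def u\<^sub>0_def)
    have "cinner u\<^sub>0 g = 0" by (simp add: u\<^sub>0_def p_def cinner_add_left cinner_scaleC_left w1)
    then have "cmod (f u\<^sub>0) \<le> \<bar>C\<bar> * norm u\<^sub>0"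
      using C u\<^sub>0S by (meson abs_ge_self mult_right_mono norm_ge_zero order.trans)
    also have "\<dots> \<le> \<bar>C\<bar> * (norm u + cmod p * norm w)"
      using norm_triangle_ineq[of u "(- p) *\<^sub>C w"]
      by (intro mult_left_mono) (simp_all add: u\<^sub>0_def norm_scaleC)
    finally have fu\<^sub>0: "cmod (f u\<^sub>0) \<le> \<bar>C\<bar> * (norm u + cmod p * norm w)" .
    have "f u = f u\<^sub>0 + p * f w"
      using f u wS pwS by (simp add: complex_linear_on_def u\<^sub>0_def)
    then have "cmod (f u) \<le> \<bar>C\<bar> * (norm u + cmod p * norm w) + cmod p * cmod (f w)"
      using fu\<^sub>0 norm_triangle_ineq[of "f u\<^sub>0" "p * f w"] by (simp add: norm_mult)
    also have "\<dots> \<le> \<bar>C\<bar> * (norm u + norm u * norm g * norm w) + norm u * norm g * cmod (f w)"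
      using cinner_Cauchy_Schwarz[of u g]
      by (intro add_mono mult_left_mono mult_right_mono) (simp_all add: p_def)
    also have "\<dots> = (\<bar>C\<bar> + \<bar>C\<bar> * norm g * norm w + norm g * cmod (f w)) * norm u"
      by (simp add: algebra_simps)
    finally show "cmod (f u) \<le> (\<bar>C\<bar> + \<bar>C\<bar> * norm g * norm w + norm g * cmod (f w)) * norm u" .
  qed
qed

lemma bounded_if_bounded_on_finite_orthogonal:
  fixes g :: "'i \<Rightarrow> 'a::complex_inner"
  assumes "finite J" and "complex_subspace S" and "complex_linear_on S f"
    and "\<forall>u\<in>S. (\<forall>j\<in>J. cinner u (g j) = 0) \<longrightarrow> cmod (f u) \<le> C * norm u"
  shows "\<exists>K. \<forall>u\<in>S. cmod (f u) \<le> K * norm u"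
  using assms
proof (induction J arbitrary: S rule: finite_induct)
  case empty
  then show ?case by auto
next
  case (insert j J)
  let ?S' = "{u\<in>S. cinner u (g j) = 0}"
  have "complex_subspace ?S'" using insert.prems(1) by (rule complex_subspace_orthogonal)
  moreover have "complex_linear_on ?S' f"
    using insert.prems(2) by (simp add: complex_linear_on_def)
  moreover have "\<forall>u\<in>?S'. (\<forall>j\<in>J. cinner u (g j) = 0) \<longrightarrow> cmod (f u) \<le> C * norm u"
    using insert.prems(3) by auto
  ultimately obtain K where "\<forall>u\<in>?S'. cmod (f u) \<le> K * norm u"
    using insert.IH by blast
  then show ?case
    using bounded_if_bounded_on_orthogonal[OF insert.prems(1,2)] by blast
qed

definition energy :: "('a::complex_inner \<Rightarrow> complex) \<Rightarrow> 'a \<Rightarrow> real" where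
  "energy f u = (norm u)\<^sup>2 - 2 * Re (f u)"

lemma energy_midpoint:
  assumes S: "complex_subspace S" and f: "complex_linear_on S f" and a: "a \<in> S" and b: "b \<in> S"
  shows "energy f a + energy f b = 2 * energy f ((1/2) *\<^sub>R (a + b)) + (norm (a - b))\<^sup>2 / 2"
proof -
  define h where "h = (1/2) *\<^sub>R (a + b)"
  have "a + b \<in> S" using S a b by (simp add: complex_subspace_def)
  then have "Re (f h) = (Re (f a) + Re (f b)) / 2"
    using f a b by (simp add: h_def complex_linear_on_scaleR complex_linear_on_def)
  moreover have "(norm h)\<^sup>2 = (norm (a + b))\<^sup>2 / 4"
    by (simp add: h_def power_divide)
  ultimately show ?thesis
    using parallelogram_law[of a b] unfolding h_def[symmetric] energy_def by (simp add: field_simps)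
qed

lemma energy_add_scaleR:
  assumes S: "complex_subspace S" and f: "complex_linear_on S f" and u: "u \<in> S" and v: "v \<in> S"
  shows "energy f (u + t *\<^sub>R v) = energy f u + 2 * t * (Re (cinner v u) - Re (f v)) + t\<^sup>2 * (norm v)\<^sup>2"
proof -
  have "t *\<^sub>R v \<in> S" using S v by (rule complex_subspace_scaleR)
  then have "Re (f (u + t *\<^sub>R v)) = Re (f u) + t * Re (f v)"
    using f u v by (simp add: complex_linear_on_def complex_linear_on_scaleR)
  moreover have "Re (cinner u (t *\<^sub>R v)) = t * Re (cinner v u)"
    by (simp add: cinner_scaleR_right) (subst cinner_commute, simp)
  ultimately show ?thesis
    by (simp add: energy_def power2_norm_add algebra_simps)
qed

lemma linear_coeff_zero_if_quadratic_nonneg: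
  fixes a b :: real
  assumes "b \<ge> 0" and "\<And>t. 0 \<le> 2 * t * a + t\<^sup>2 * b"
  shows "a = 0"
proof (rule ccontr)
  assume "a \<noteq> 0"
  define t where "t = - a / (b + 1)"
  have ts: "t * (b + 1) = - a" using assms(1) by (simp add: t_def)
  have "(2 * t * a + t\<^sup>2 * b) * (b + 1)\<^sup>2 = 2 * a * (t * (b + 1)) * (b + 1) + (t * (b + 1))\<^sup>2 * b"
    by (simp add: algebra_simps power2_eq_square)
  also have "\<dots> = - (a\<^sup>2 * (b + 2))" unfolding ts by (simp add: algebra_simps power2_eq_square)
  also have "\<dots> < 0" using \<open>a \<noteq> 0\<close> assms(1) by simp
  finally show False using assms(2)[of t] by (simp add: mult_less_0_iff)
qed

lemma minimising_sequence_Cauchy: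
  assumes S: "complex_subspace S" and f: "complex_linear_on S f"
    and m: "\<forall>v\<in>S. m \<le> energy f v"
    and u: "\<And>k. u k \<in> S" "\<And>k. energy f (u k) < m + inverse (real (Suc k))"
  shows "Cauchy u"
proof (rule metric_CauchyI)
  fix e :: real assume e: "0 < e"
  obtain N :: nat where N: "4 / e\<^sup>2 < real N" using reals_Archimedean2 by blast
  have "4 < e\<^sup>2 * real N" using N e by (simp add: divide_less_eq mult.commute)
  also have "\<dots> < e\<^sup>2 * (real N + 1)" using e by simp
  finally have N': "4 / (real N + 1) < e\<^sup>2" by (simp add: pos_divide_less_eq)
  show "\<exists>M. \<forall>p\<ge>M. \<forall>q\<ge>M. dist (u p) (u q) < e"
  proof (intro exI allI impI)
    fix p q assume p: "N \<le> p" and q: "N \<le> q"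
    have "(1/2) *\<^sub>R (u p + u q) \<in> S"
      using S u(1) by (simp add: complex_subspace_def complex_subspace_scaleR)
    then have "(norm (u p - u q))\<^sup>2 \<le> 2 * (energy f (u p) + energy f (u q) - 2 * m)"
      using energy_midpoint[OF S f u(1) u(1), of p q] m by fastforce
    also have "\<dots> < 2 * (inverse (real (Suc p)) + inverse (real (Suc q)))"
      using u(2)[of p] u(2)[of q] by argo
    also have "\<dots> \<le> 2 * (inverse (real (Suc N)) + inverse (real (Suc N)))"
      using p q by (intro mult_left_mono add_mono le_imp_inverse_le) auto
    also have "\<dots> = 4 / (real N + 1)" by (simp add: field_simps)
    finally have "(norm (u p - u q))\<^sup>2 < e\<^sup>2" using N' by linarith
    then show "dist (u p) (u q) < e" using e by (simp add: dist_norm power2_less_imp_less)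
  qed
qed

lemma Re_cinner_limit_minimising_sequence:
  assumes S: "complex_subspace S" and f: "complex_linear_on S f"
    and m: "\<forall>v\<in>S. m \<le> energy f v"
    and u: "\<And>k. u k \<in> S" "\<And>k. energy f (u k) < m + inverse (real (Suc k))"
    and y: "u \<longlonglongrightarrow> y" and v: "v \<in> S"
  shows "Re (cinner v y) = Re (f v)"
proof -
  have "Re (cinner v y) - Re (f v) = 0"
  proof (rule linear_coeff_zero_if_quadratic_nonneg[where b = "(norm v)\<^sup>2"])
    fix t :: real
    \<comment> \<open>\<open>u k + t v\<close> competes with \<open>u k\<close> in the minimisation\<close>
    have "0 \<le> 2 * t * (Re (cinner v (u k)) - Re (f v)) + t\<^sup>2 * (norm v)\<^sup>2 + inverse (real (Suc k))"
      for k
    proof -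
      have "u k + t *\<^sub>R v \<in> S"
        using S u(1) complex_subspace_scaleR[OF S v] by (simp add: complex_subspace_def)
      then have "m \<le> energy f (u k + t *\<^sub>R v)" using m by blast
      then show ?thesis using energy_add_scaleR[OF S f u(1) v, of k t] u(2)[of k] by argo
    qed
    moreover have "(\<lambda>k. 2 * t * (Re (cinner v (u k)) - Re (f v)) + t\<^sup>2 * (norm v)\<^sup>2
        + inverse (real (Suc k))) \<longlonglongrightarrow> 2 * t * (Re (cinner v y) - Re (f v)) + t\<^sup>2 * (norm v)\<^sup>2 + 0"
      by (intro tendsto_intros bounded_linear.tendsto[OF bounded_linear_cinner_right] y
          LIMSEQ_inverse_real_of_nat)
    ultimately show "0 \<le> 2 * t * (Re (cinner v y) - Re (f v)) + t\<^sup>2 * (norm v)\<^sup>2"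
      using LIMSEQ_le_const[of _ "2 * t * (Re (cinner v y) - Re (f v)) + t\<^sup>2 * (norm v)\<^sup>2 + 0" 0]
      by simp
  qed simp
  then show ?thesis by simp
qed

theorem bounded_functional_representation:
  fixes S :: "'a::{complex_inner, complete_space} set"
  assumes S: "complex_subspace S" and f: "complex_linear_on S f"
    and K: "\<forall>u\<in>S. cmod (f u) \<le> K * norm u"
  shows "\<exists>y. \<forall>v\<in>S. f v = cinner v y"
proof -
  have lower: "- K\<^sup>2 \<le> energy f u" if "u \<in> S" for u
  proof -
    have "Re (f u) \<le> K * norm u" using K that abs_Re_le_cmod[of "f u"] by fastforce
    moreover have "2 * (K * norm u) \<le> (norm u)\<^sup>2 + K\<^sup>2"
      using zero_le_power2[of "norm u - K"] by (simp add: power2_diff algebra_simps)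
    ultimately show ?thesis unfolding energy_def by linarith
  qed
  define m where "m = Inf (energy f ` S)"
  have bdd: "bdd_below (energy f ` S)" using lower by (auto simp: bdd_below_def)
  have m: "\<forall>v\<in>S. m \<le> energy f v" using cInf_lower[OF _ bdd] by (simp add: m_def)
  have "\<exists>v\<in>S. energy f v < m + inverse (real (Suc k))" for k
    using cInf_less_iff[OF _ bdd, of "m + inverse (real (Suc k))"] S
    by (auto simp: m_def complex_subspace_def)
  then obtain u where u: "\<And>k. u k \<in> S" "\<And>k. energy f (u k) < m + inverse (real (Suc k))"
    by metis
  obtain y where y: "u \<longlonglongrightarrow> y"
    using minimising_sequence_Cauchy[OF S f m u] Cauchy_convergent_iff convergent_def by blast
  note Re_eq = Re_cinner_limit_minimising_sequence[OF S f m u y]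
  have "f v = cinner v y" if v: "v \<in> S" for v
  proof -
    have "\<i> *\<^sub>C v \<in> S" using S v by (simp add: complex_subspace_def)
    from Re_eq[OF this] have "Im (cinner v y) = Im (f v)"
      using f v by (simp add: cinner_scaleC_left complex_linear_on_def)
    with Re_eq[OF v] show ?thesis by (simp add: complex_eq_iff)
  qed
  then show ?thesis by blast
qed

theorem lemma9p1:
  fixes D :: "'a::{complex_inner, complete_space} set"
    and T :: "'a \<Rightarrow> 'a"
    and g :: "nat \<Rightarrow> 'a" and n :: nat and x :: 'a
  assumes "is_operator D T"
    and "densely_defined D"
    and "symmetric_op D T"
    and "\<exists>C. \<forall>u\<in>{u\<in>D. \<forall>j\<in>{1..n}. cinner u (g j) = 0}. norm (cinner (T u) x) \<le> C * norm u"
  shows "x \<in> adjoint_domain D T"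
proof -
  define f where "f u = cinner (T u) x" for u
  have S: "complex_subspace D" using assms(1) by (simp add: is_operator_def complex_subspace_def)
  have lin: "complex_linear_on D f" using assms(1)
    by (simp add: is_operator_def complex_linear_on_def f_def cinner_add_left cinner_scaleC_left)
  obtain C where "\<forall>u\<in>D. (\<forall>j\<in>{1..n}. cinner u (g j) = 0) \<longrightarrow> cmod (f u) \<le> C * norm u"
    using assms(4) by (auto simp: f_def)
  then obtain K where "\<forall>u\<in>D. cmod (f u) \<le> K * norm u"
    using bounded_if_bounded_on_finite_orthogonal[OF finite_atLeastAtMost S lin] by blast
  then obtain y where "\<forall>u\<in>D. f u = cinner u y"
    using bounded_functional_representation[OF S lin] by blast
  then show ?thesis by (auto simp: adjoint_domain_def f_def)
qed

end
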